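(* Let $a>0$ and let $\omega$ solve the linear equation $i\omega_t+\omega_{xx}+\frac{a^2}{2t}(\omega+\overline\omega)=0$ for $t\ge1$, and let $S(t,1)$ denote the (real-linear) solution operator of this equation from time $1$ to time $t$. Let $J(t)=x+2it\partial_x$. Then for $\xi\ne0$ the evolution of $J(t)\omega(t)$ is described by $$J(t)\omega(t)=S(t,1)J(1)\omega(1)+S(t,1)\mathcal F^{-1}\left(\frac{2a^2}\xi\widehat{\Re\omega}(1,\xi)\right)-\mathcal F^{-1}\left(\frac{2a^2}\xi\widehat{\Re\omega}(t,\xi)\right),$$ understood as equality of Fourier transforms at every frequency $\xi\ne0$.
   Context: $\mathcal F$ (or $\hat{\ }$) denotes the Fourier transform in $x$, $\hat f(\xi)=\int e^{-ix\xi}f(x)dx$, and $\mathcal F^{-1}$ its inverse; $\widehat{\Re\omega}(t,\xi)$ is the Fourier transform of the real part of $\omega(t,\cdot)$. *)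

theory Defs
  imports "HOL-Analysis.Analysis"
begin

definition fourier :: "(real \<Rightarrow> complex) \<Rightarrow> real \<Rightarrow> complex" where
  "fourier f \<xi> = (LINT x|lborel. exp (- \<i> * complex_of_real (x * \<xi>)) * f x)"

definition Jop :: "real \<Rightarrow> (real \<Rightarrow> complex) \<Rightarrow> real \<Rightarrow> complex" where
  "Jop t f x = complex_of_real x * f x + 2 * \<i> * complex_of_real t * vector_derivative f (at x)"

text \<open>The equation i w_t + w_xx + a^2/(2t) (w + conj w) = 0 written on the Fourier side
  (for v(t,xi) = F(w(t))(xi)), for t >= 1:
  i v_t(t,xi) - xi^2 v(t,xi) + a^2/(2t) (v(t,xi) + conj(v(t,-xi))) = 0.\<close>
definition solves_fourier_eq :: "real \<Rightarrow> (real \<Rightarrow> real \<Rightarrow> complex) \<Rightarrow> bool" where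
  "solves_fourier_eq a v \<longleftrightarrow>
     (\<forall>\<eta>. \<forall>s\<ge>1. \<exists>d. ((\<lambda>r. v r \<eta>) has_vector_derivative d) (at s within {1..}) \<and>
        \<i> * d - complex_of_real (\<eta>\<^sup>2) * v s \<eta>
          + complex_of_real (a\<^sup>2 / (2 * s)) * (v s \<eta> + cnj (v s (- \<eta>))) = 0)"

text \<open>Solution operator S(t,1) on the Fourier side: sol_op_F a t g = F(S(t,1) F^{-1} g).\<close>
definition sol_op_F :: "real \<Rightarrow> real \<Rightarrow> (real \<Rightarrow> complex) \<Rightarrow> real \<Rightarrow> complex" where
  "sol_op_F a t g \<xi> =
     (THE z. \<exists>v. solves_fourier_eq a v \<and> (\<forall>\<eta>. v 1 \<eta> = g \<eta>) \<and> v t \<xi> = z)"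

end

theory Submission
  imports Defs "HOL-Probability.Sinc_Integral" "HOL-Real_Asymp.Real_Asymp"
begin

text \<open>On the Fourier side the equation couples only the frequencies \<open>\<xi>\<close> and \<open>-\<xi>\<close>, so for each
  \<open>\<xi>\<close> it is a linear ODE with bounded coefficients for the pair \<open>(v(t,\<xi>), v(t,-\<xi>))\<close>. Such ODEs
  have unique global solutions, so \<open>S(t,1)\<close> is well defined and real-linear. Writing
  \<open>V = \<omega>\<^sup>^\<close> and \<open>A = (x\<omega>)\<^sup>^\<close>, integration by parts gives \<open>(J\<omega>)\<^sup>^ = A - 2t\<xi>V\<close>, and the
  equation gives the time derivatives of \<open>V\<close> and \<open>A\<close>. Because \<open>J\<close> does not commute with complex
  conjugation, \<open>(J\<omega>)\<^sup>^\<close> alone is not a solution, but \<open>W = (J\<omega>)\<^sup>^ + (2a\<^sup>2/\<xi>)(Re \<omega>)\<^sup>^\<close> is: a direct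
  computation shows that it satisfies the equation. Uniqueness then gives \<open>W(t) = S(t,1)W(1)\<close>,
  and linearity of \<open>S(t,1)\<close> splits this into the stated identity.\<close>

section \<open>Functions with polynomial decay\<close>

lemma integrable_square_decay:
  fixes f :: "real \<Rightarrow> 'a::{banach, second_countable_topology}"
  assumes f: "f \<in> borel_measurable lborel" and bound: "\<And>x. norm (f x) \<le> C / (1 + \<bar>x\<bar>) ^ 2"
  shows "integrable lborel f"
proof (rule Bochner_Integration.integrable_bound[OF _ f])
  show "integrable lborel (\<lambda>x::real. \<bar>C\<bar> * inverse (1 + x ^ 2))"
    using integrable_inverse_1_plus_square by (simp add: set_integrable_def einterval_eq_UNIV)
  show "AE x in lborel. norm (f x) \<le> norm (\<bar>C\<bar> * inverse (1 + x ^ 2))"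
  proof (rule AE_I2)
    fix x :: real
    have "1 + x ^ 2 \<le> (1 + \<bar>x\<bar>) ^ 2"
      by (simp add: power2_eq_square algebra_simps)
    then have "\<bar>C\<bar> / (1 + \<bar>x\<bar>) ^ 2 \<le> \<bar>C\<bar> / (1 + x ^ 2)"
      by (intro divide_left_mono) (auto simp: add_pos_nonneg)
    moreover have "C / (1 + \<bar>x\<bar>) ^ 2 \<le> \<bar>C\<bar> / (1 + \<bar>x\<bar>) ^ 2"
      by (intro divide_right_mono) auto
    ultimately show "norm (f x) \<le> norm (\<bar>C\<bar> * inverse (1 + x ^ 2))"
      using bound[of x] by (simp add: divide_inverse)
  qed
qed

lemma tendsto_zero_square_decay:
  fixes f :: "real \<Rightarrow> 'a::real_normed_vector"
  assumes bound: "\<And>x. norm (f x) \<le> C / (1 + \<bar>x\<bar>) ^ 2"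
  shows "(f \<longlongrightarrow> 0) at_top" and "(f \<longlongrightarrow> 0) at_bot"
proof -
  have "((\<lambda>x::real. C / (1 + \<bar>x\<bar>) ^ 2) \<longlongrightarrow> 0) at_top"
       "((\<lambda>x::real. C / (1 + \<bar>x\<bar>) ^ 2) \<longlongrightarrow> 0) at_bot"
    by real_asymp+
  then show "(f \<longlongrightarrow> 0) at_top" and "(f \<longlongrightarrow> 0) at_bot"
    by (auto intro: Lim_null_comparison[rotated] always_eventually bound)
qed

lemma cube_decay_imp_square_decay:
  fixes f :: "real \<Rightarrow> complex"
  assumes bound: "\<And>x. norm (f x) \<le> C / (1 + \<bar>x\<bar>) ^ 3"
  shows "norm (f x) \<le> C / (1 + \<bar>x\<bar>) ^ 2"
    and "norm (complex_of_real x * f x) \<le> C / (1 + \<bar>x\<bar>) ^ 2"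
proof -
  define y where "y = 1 + \<bar>x\<bar>"
  have pos: "0 < y"
    by (simp add: y_def add_pos_nonneg)
  have "y * norm (f x) \<le> y * (C / y ^ 3)"
    using bound pos by (intro mult_left_mono) (auto simp: y_def)
  also have "\<dots> = C / y ^ 2"
    using pos by (simp add: divide_simps) (simp add: power3_eq_cube power2_eq_square)
  finally have le: "y * norm (f x) \<le> C / y ^ 2" .
  show "norm (f x) \<le> C / (1 + \<bar>x\<bar>) ^ 2"
    using le mult_right_mono[of 1 y "norm (f x)"] by (simp add: y_def)
  show "norm (complex_of_real x * f x) \<le> C / (1 + \<bar>x\<bar>) ^ 2"
    using le mult_right_mono[of "\<bar>x\<bar>" y "norm (f x)"] by (simp add: y_def norm_mult)
qed

lemma
  fixes f :: "real \<Rightarrow> complex"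
  assumes f: "continuous_on UNIV f" and bound: "\<And>x. norm (f x) \<le> C / (1 + \<bar>x\<bar>) ^ 3"
  shows integrable_cube_decay: "integrable lborel f"
          "integrable lborel (\<lambda>x. complex_of_real x * f x)"
    and tendsto_zero_cube_decay: "(f \<longlongrightarrow> 0) at_top" "(f \<longlongrightarrow> 0) at_bot"
          "((\<lambda>x. complex_of_real x * f x) \<longlongrightarrow> 0) at_top"
          "((\<lambda>x. complex_of_real x * f x) \<longlongrightarrow> 0) at_bot"
proof -
  have meas: "f \<in> borel_measurable lborel"
    using f by (simp add: borel_measurable_continuous_onI)
  note square = cube_decay_imp_square_decay[OF bound]
  show "integrable lborel f" "integrable lborel (\<lambda>x. complex_of_real x * f x)"
    using meas by (auto intro!: integrable_square_decay[where C = C] square)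
  show "(f \<longlongrightarrow> 0) at_top" "(f \<longlongrightarrow> 0) at_bot"
    by (rule tendsto_zero_square_decay, rule square)+
  show "((\<lambda>x. complex_of_real x * f x) \<longlongrightarrow> 0) at_top"
       "((\<lambda>x. complex_of_real x * f x) \<longlongrightarrow> 0) at_bot"
    by (rule tendsto_zero_square_decay, rule square)+
qed

section \<open>The Fourier transform\<close>

lemma norm_fourier_kernel [simp]: "norm (exp (- \<i> * complex_of_real (x * \<xi>))) = 1"
  by (simp add: norm_exp_eq_Re)

lemma integrable_fourier_kernel_mult:
  assumes "integrable lborel f"
  shows "integrable lborel (\<lambda>x. exp (- \<i> * complex_of_real (x * \<xi>)) * f x)"
proof (rule Bochner_Integration.integrable_bound[OF integrable_norm[OF assms]])
  show "(\<lambda>x. exp (- \<i> * complex_of_real (x * \<xi>)) * f x) \<in> borel_measurable lborel"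
    using borel_measurable_integrable[OF assms] by measurable
qed (simp add: norm_mult)

lemma fourier_add:
  assumes "integrable lborel f" and "integrable lborel g"
  shows "fourier (\<lambda>x. f x + g x) \<xi> = fourier f \<xi> + fourier g \<xi>"
  unfolding fourier_def distrib_left
  by (intro Bochner_Integration.integral_add integrable_fourier_kernel_mult assms)

lemma fourier_mult_left: "fourier (\<lambda>x. c * f x) \<xi> = c * fourier f \<xi>"
  unfolding fourier_def by (simp add: mult.left_commute)

lemma fourier_cnj: "fourier (\<lambda>x. cnj (f x)) \<xi> = cnj (fourier f (- \<xi>))"
proof -
  have "exp (- \<i> * complex_of_real (x * \<xi>)) * cnj (f x)
      = cnj (exp (- \<i> * complex_of_real (x * - \<xi>)) * f x)" for x
    by (simp add: exp_cnj)
  then show ?thesis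
    unfolding fourier_def by (simp only: Bochner_Integration.integral_cnj)
qed

lemma fourier_Re:
  assumes "integrable lborel f"
  shows "fourier (\<lambda>x. complex_of_real (Re (f x))) \<xi> = (fourier f \<xi> + cnj (fourier f (- \<xi>))) / 2"
proof -
  have "fourier (\<lambda>x. complex_of_real (Re (f x))) \<xi> = fourier (\<lambda>x. (1 / 2) * (f x + cnj (f x))) \<xi>"
    by (simp add: complex_add_cnj)
  also have "\<dots> = (1 / 2) * (fourier f \<xi> + fourier (\<lambda>x. cnj (f x)) \<xi>)"
    using assms by (simp only: fourier_mult_left fourier_add integrable_cnj)
  also have "\<dots> = (fourier f \<xi> + cnj (fourier f (- \<xi>))) / 2"
    by (simp add: fourier_cnj)
  finally show ?thesis .
qed

lemma fourier_equation_rhs: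
  assumes f: "integrable lborel f" and g: "integrable lborel g"
  shows "fourier (\<lambda>x. \<i> * g x + \<i> * c * (f x + cnj (f x))) \<xi>
    = \<i> * fourier g \<xi> + \<i> * c * (fourier f \<xi> + cnj (fourier f (- \<xi>)))"
proof -
  have "fourier (\<lambda>x. \<i> * g x + \<i> * c * (f x + cnj (f x))) \<xi>
      = fourier (\<lambda>x. \<i> * g x) \<xi> + fourier (\<lambda>x. \<i> * c * (f x + cnj (f x))) \<xi>"
    using f g by (intro fourier_add) auto
  also have "\<dots> = \<i> * fourier g \<xi> + \<i> * c * (fourier f \<xi> + fourier (\<lambda>x. cnj (f x)) \<xi>)"
    using f by (simp only: fourier_mult_left fourier_add integrable_cnj)
  finally show ?thesis
    by (simp only: fourier_cnj)
qed

lemma fourier_vector_derivative: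
  fixes f f' :: "real \<Rightarrow> complex"
  assumes der: "\<And>x. (f has_vector_derivative f' x) (at x)" and cont: "\<And>x. isCont f' x"
    and f: "integrable lborel f" and f': "integrable lborel f'"
    and "(f \<longlongrightarrow> 0) at_top" and "(f \<longlongrightarrow> 0) at_bot"
  shows "fourier f' \<xi> = \<i> * complex_of_real \<xi> * fourier f \<xi>"
proof -
  define e where "e x = exp (- \<i> * complex_of_real (x * \<xi>))" for x
  define G where "G x = e x * f' x - \<i> * complex_of_real \<xi> * (e x * f x)" for x
  have dF: "((\<lambda>x. e x * f x) has_vector_derivative G x) (at x)" for x
    unfolding e_def G_def
    by (rule derivative_eq_intros der refl has_vector_derivative_real_field | simp)+
  have ef: "integrable lborel (\<lambda>x. e x * f x)" and ef': "integrable lborel (\<lambda>x. e x * f' x)"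
    unfolding e_def by (rule integrable_fourier_kernel_mult[OF f], rule integrable_fourier_kernel_mult[OF f'])
  have lim: "((\<lambda>x. e x * f x) \<longlongrightarrow> 0) F" if "(f \<longlongrightarrow> 0) F" for F
  proof -
    have "norm (e x) = 1" for x
      unfolding e_def by (rule norm_fourier_kernel)
    then have "((\<lambda>x. norm (e x * f x)) \<longlongrightarrow> 0) F"
      using tendsto_norm[OF that] by (simp add: norm_mult)
    then show ?thesis
      by (rule tendsto_norm_zero_cancel)
  qed
  have "(LBINT x=-\<infinity>..\<infinity>. G x) = 0 - 0"
  proof (rule interval_integral_FTC_integrable[where F = "\<lambda>x. e x * f x"])
    show "isCont G x" for x
      unfolding G_def e_def
      using cont[of x] has_vector_derivative_continuous[OF der[of x]] by (intro continuous_intros)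
    show "set_integrable lborel (einterval (- \<infinity>) \<infinity>) G"
      using ef ef' by (simp add: G_def set_integrable_def einterval_eq_UNIV)
    show "(((\<lambda>x. e x * f x) \<circ> real_of_ereal) \<longlongrightarrow> 0) (at_right (- \<infinity>))"
         "(((\<lambda>x. e x * f x) \<circ> real_of_ereal) \<longlongrightarrow> 0) (at_left \<infinity>)"
      unfolding ereal_tendsto_simps using lim assms(5,6) by auto
  qed (use dF in auto)
  then have "(\<integral>x. G x \<partial>lborel) = 0"
    by (simp add: interval_lebesgue_integral_def set_lebesgue_integral_def einterval_eq_UNIV)
  moreover have "(\<integral>x. G x \<partial>lborel) = fourier f' \<xi> - \<i> * complex_of_real \<xi> * fourier f \<xi>"
    unfolding G_def fourier_def e_def[symmetric] using ef ef' by simp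
  ultimately show ?thesis
    by simp
qed

lemma fourier_x_vector_derivative:
  fixes f f' :: "real \<Rightarrow> complex"
  assumes der: "\<And>x. (f has_vector_derivative f' x) (at x)" and cont: "\<And>x. isCont f' x"
    and f: "integrable lborel f" and xf: "integrable lborel (\<lambda>x. complex_of_real x * f x)"
    and xf': "integrable lborel (\<lambda>x. complex_of_real x * f' x)"
    and "((\<lambda>x. complex_of_real x * f x) \<longlongrightarrow> 0) at_top"
    and "((\<lambda>x. complex_of_real x * f x) \<longlongrightarrow> 0) at_bot"
  shows "fourier (\<lambda>x. complex_of_real x * f' x) \<xi>
    = \<i> * complex_of_real \<xi> * fourier (\<lambda>x. complex_of_real x * f x) \<xi> - fourier f \<xi>"
proof -
  have "fourier (\<lambda>x. f x + complex_of_real x * f' x) \<xi>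
      = \<i> * complex_of_real \<xi> * fourier (\<lambda>x. complex_of_real x * f x) \<xi>"
  proof (rule fourier_vector_derivative)
    show "((\<lambda>x. complex_of_real x * f x) has_vector_derivative f x + complex_of_real x * f' x) (at x)"
      for x
    proof -
      have "((\<lambda>x. complex_of_real x) has_vector_derivative 1) (at x)"
        by (auto intro!: derivative_eq_intros
            simp flip: has_real_derivative_iff_has_vector_derivative)
      from has_vector_derivative_mult[OF this der[of x]] show ?thesis
        by (simp add: add.commute)
    qed
    show "isCont (\<lambda>x. f x + complex_of_real x * f' x) x" for x
      using has_vector_derivative_continuous[OF der[of x]] cont[of x] by (intro continuous_intros)
  qed (use f xf xf' assms(6,7) in auto)
  then show ?thesis
    using f xf' by (simp add: fourier_add algebra_simps)
qed

lemma has_vector_derivative_iff_tendsto_quotient: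
  fixes f :: "real \<Rightarrow> complex"
  shows "(f has_vector_derivative d) (at x within S) \<longleftrightarrow>
         ((\<lambda>y. (f y - f x) / complex_of_real (y - x)) \<longlongrightarrow> d) (at x within S)"
proof -
  have "(\<lambda>y. (f y - f x) / complex_of_real (y - x))
      = (\<lambda>y. Complex ((Re (f y) - Re (f x)) / (y - x)) ((Im (f y) - Im (f x)) / (y - x)))"
    by (auto simp: complex_eq_iff Re_divide Im_divide power2_eq_square)
  then show ?thesis
    unfolding has_vector_derivative_complex_iff has_field_derivative_iff tendsto_complex_iff
    by simp
qed

lemma norm_diff_le_vector_derivative_bound:
  fixes f :: "real \<Rightarrow> 'a::real_normed_vector"
  assumes "\<And>r. r \<in> {a..b} \<Longrightarrow> (f has_vector_derivative f' r) (at r within {a..b})"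
    and "\<And>r. r \<in> {a..b} \<Longrightarrow> norm (f' r) \<le> B" and "x \<in> {a..b}" and "y \<in> {a..b}"
  shows "norm (f x - f y) \<le> B * \<bar>x - y\<bar>"
  using differentiable_bound[of "{a..b}" f "\<lambda>r h. h *\<^sub>R f' r" B x y] assms
  by (simp add: has_vector_derivative_def onorm_scaleR_left onorm_id)

text \<open>Differentiation under the integral sign, by dominated convergence of the difference
  quotients, which the mean value theorem bounds by the dominating function \<open>B\<close>.\<close>

lemma has_vector_derivative_integral_parameter:
  fixes g g' :: "real \<Rightarrow> real \<Rightarrow> complex"
  assumes s: "c \<le> s"
    and der: "\<And>r x. c \<le> r \<Longrightarrow> ((\<lambda>r. g r x) has_vector_derivative g' r x) (at r within {c..})"
    and g: "\<And>r. c \<le> r \<Longrightarrow> integrable lborel (g r)"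
    and g': "g' s \<in> borel_measurable lborel"
    and bound: "\<And>r x. c \<le> r \<Longrightarrow> r \<le> s + 1 \<Longrightarrow> norm (g' r x) \<le> B x"
    and B: "integrable lborel B"
  shows "((\<lambda>r. \<integral>x. g r x \<partial>lborel) has_vector_derivative (\<integral>x. g' s x \<partial>lborel)) (at s within {c..})"
proof -
  have at_within: "at s within {c..} = at s within {c..s+1}"
    by (rule at_within_nhd[where S = "{..<s+1}"]) auto
  show ?thesis
    unfolding has_vector_derivative_iff_tendsto_quotient at_within tendsto_at_iff_sequentially
  proof (intro allI impI)
    fix X :: "nat \<Rightarrow> real"
    assume X: "\<forall>i. X i \<in> {c..s+1} - {s}" and X_lim: "X \<longlonglongrightarrow> s"
    define q where "q i x = (g (X i) x - g s x) / complex_of_real (X i - s)" for i x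
    have Xi: "c \<le> X i" "X i \<le> s + 1" "X i \<noteq> s" for i
      using X by auto
    have "(\<lambda>i. \<integral>x. q i x \<partial>lborel) \<longlonglongrightarrow> (\<integral>x. g' s x \<partial>lborel)"
    proof (rule integral_dominated_convergence[where w = B])
      show "q i \<in> borel_measurable lborel" for i
        unfolding q_def using g[OF Xi(1)] g[OF s] by measurable
      show "AE x in lborel. (\<lambda>i. q i x) \<longlonglongrightarrow> g' s x"
      proof (rule AE_I2)
        fix x
        have "((\<lambda>r. (g r x - g s x) / complex_of_real (r - s)) \<longlongrightarrow> g' s x) (at s within {c..})"
          using der[OF s, of x] unfolding has_vector_derivative_iff_tendsto_quotient .
        then show "(\<lambda>i. q i x) \<longlonglongrightarrow> g' s x"
          using X X_lim unfolding tendsto_at_iff_sequentially by (auto simp: q_def comp_def)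
      qed
      show "AE x in lborel. norm (q i x) \<le> B x" for i
      proof (rule AE_I2)
        fix x
        have "norm (g (X i) x - g s x) \<le> B x * \<bar>X i - s\<bar>"
        proof (rule norm_diff_le_vector_derivative_bound[where a = c and b = "s + 1"])
          show "((\<lambda>r. g r x) has_vector_derivative g' r x) (at r within {c..s + 1})"
            if "r \<in> {c..s + 1}" for r
            using has_vector_derivative_within_subset[OF der] that by auto
        qed (use bound Xi[of i] s in auto)
        then show "norm (q i x) \<le> B x"
          using Xi(3)[of i] by (simp add: q_def norm_divide divide_le_eq flip: of_real_diff)
      qed
    qed (use g' B in auto)
    moreover have "(\<integral>x. q i x \<partial>lborel)
        = ((\<integral>x. g (X i) x \<partial>lborel) - (\<integral>x. g s x \<partial>lborel)) / complex_of_real (X i - s)" for i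
      using g[OF Xi(1)] g[OF s] by (simp add: q_def)
    ultimately show "((\<lambda>r. ((\<integral>x. g r x \<partial>lborel) - (\<integral>x. g s x \<partial>lborel)) / complex_of_real (r - s)) \<circ> X)
        \<longlonglongrightarrow> (\<integral>x. g' s x \<partial>lborel)"
      by (simp add: comp_def)
  qed
qed

lemma has_vector_derivative_fourier_parameter:
  fixes g g' :: "real \<Rightarrow> real \<Rightarrow> complex"
  assumes s: "c \<le> s"
    and der: "\<And>r x. c \<le> r \<Longrightarrow> ((\<lambda>r. g r x) has_vector_derivative g' r x) (at r within {c..})"
    and g: "\<And>r. c \<le> r \<Longrightarrow> integrable lborel (g r)"
    and g': "integrable lborel (g' s)"
    and bound: "\<And>r x. c \<le> r \<Longrightarrow> r \<le> s + 1 \<Longrightarrow> norm (g' r x) \<le> B x"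
    and B: "integrable lborel B"
  shows "((\<lambda>r. fourier (g r) \<xi>) has_vector_derivative fourier (g' s) \<xi>) (at s within {c..})"
  unfolding fourier_def
proof (rule has_vector_derivative_integral_parameter[OF s _ _ _ _ B])
  show "c \<le> r \<Longrightarrow> integrable lborel (\<lambda>x. exp (- \<i> * complex_of_real (x * \<xi>)) * g r x)" for r
    by (rule integrable_fourier_kernel_mult[OF g])
  show "(\<lambda>x. exp (- \<i> * complex_of_real (x * \<xi>)) * g' s x) \<in> borel_measurable lborel"
    by (rule borel_measurable_integrable[OF integrable_fourier_kernel_mult[OF g']])
qed (auto intro: has_vector_derivative_mult_right der simp: norm_mult bound)

section \<open>Linear ODEs with bounded coefficients\<close>

lemma has_vector_derivative_inner_self:
  fixes D :: "real \<Rightarrow> 'a::real_inner"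
  assumes "(D has_vector_derivative d) (at s within S)"
  shows "((\<lambda>u. D u \<bullet> D u) has_real_derivative 2 * (D s \<bullet> d)) (at s within S)"
proof -
  have h: "(D has_derivative (\<lambda>h. h *\<^sub>R d)) (at s within S)"
    using assms by (simp add: has_vector_derivative_def)
  have "(\<lambda>h. D s \<bullet> (h *\<^sub>R d) + (h *\<^sub>R d) \<bullet> D s) = (*) (2 * (D s \<bullet> d))"
    by (auto simp: inner_commute algebra_simps)
  then show ?thesis
    using has_derivative_inner[OF h h] by (simp only: has_field_derivative_def)
qed

text \<open>Uniqueness: the energy \<open>e\<^sup>-\<^sup>2\<^sup>K\<^sup>s \<parallel>Y\<^sub>1 s - Y\<^sub>2 s\<parallel>\<^sup>2\<close> is nonincreasing and vanishes at \<open>c\<close>.\<close>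

lemma linear_ode_unique:
  fixes M :: "real \<Rightarrow> 'a::real_inner \<Rightarrow> 'a"
  assumes lin: "\<And>s. linear (M s)" and bound: "\<And>s x. norm (M s x) \<le> K * norm x"
    and Y1: "\<And>s. c \<le> s \<Longrightarrow> (Y1 has_vector_derivative M s (Y1 s)) (at s within {c..})"
    and Y2: "\<And>s. c \<le> s \<Longrightarrow> (Y2 has_vector_derivative M s (Y2 s)) (at s within {c..})"
    and init: "Y1 c = Y2 c" and t: "c \<le> t"
  shows "Y1 t = Y2 t"
proof -
  define D where "D s = Y1 s - Y2 s" for s
  define g where "g s = exp (- 2 * K * s) * (D s \<bullet> D s)" for s
  define g' where "g' s = exp (- 2 * K * s) * (2 * (D s \<bullet> M s (D s)) - 2 * K * (D s \<bullet> D s))" for s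
  have "(D has_vector_derivative M s (D s)) (at s within {c..})" if "c \<le> s" for s
    unfolding D_def linear_diff[OF lin] by (intro derivative_intros Y1 Y2 that)
  then have "((\<lambda>s. D s \<bullet> D s) has_real_derivative 2 * (D s \<bullet> M s (D s))) (at s within {c..})"
    if "c \<le> s" for s
    using that by (blast intro: has_vector_derivative_inner_self)
  then have dg: "(g has_real_derivative g' s) (at s within {c..})" if "c \<le> s" for s
    unfolding g_def g'_def using that
    by (auto intro!: derivative_eq_intros simp: algebra_simps)
  have "g' s \<le> 0" for s
  proof -
    have "D s \<bullet> M s (D s) \<le> norm (D s) * (K * norm (D s))"
      by (rule order_trans[OF norm_cauchy_schwarz mult_left_mono[OF bound]]) simp
    then show ?thesis
      by (simp add: g'_def mult_nonneg_nonpos power2_norm_eq_inner[symmetric] power2_eq_square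
          algebra_simps)
  qed
  then have "g t \<le> g c"
  proof (intro DERIV_nonpos_imp_decreasing_open[OF t])
    fix x assume x: "c < x" "x < t"
    have "at x within {c..} = at x"
      using x by (intro at_within_interior) auto
    then show "\<exists>y. DERIV g x :> y \<and> y \<le> 0"
      using dg[of x] x \<open>g' x \<le> 0\<close> by auto
  next
    show "continuous_on {c..t} g"
      unfolding continuous_on_eq_continuous_within
      using DERIV_continuous[OF dg] by (meson atLeastAtMost_iff atLeast_iff
          continuous_within_subset subsetI)
  qed
  then have "D t \<bullet> D t \<le> 0"
    by (simp add: g_def D_def init mult_le_0_iff)
  then show ?thesis
    by (metis D_def antisym eq_iff_diff_eq_0 inner_eq_zero_iff inner_ge_zero)
qed

lemma continuous_on_integral_upto:
  fixes g :: "real \<Rightarrow> 'a::banach"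
  assumes "continuous_on UNIV g"
  shows "continuous_on UNIV (\<lambda>t. integral {c..max c t} g)"
proof -
  have "isCont (\<lambda>t. integral {c..max c t} g) t0" for t0
  proof -
    define T where "T = max c t0 + 1"
    have "continuous_on {c..T} (\<lambda>x. integral {c..x} g)"
      by (intro indefinite_integral_continuous_1 integrable_continuous_interval
          continuous_on_subset[OF assms]) auto
    then have "continuous_on {..T} (\<lambda>t. integral {c..max c t} g)"
      by (rule continuous_on_compose2) (auto intro!: continuous_intros simp: T_def)
    moreover have "t0 \<in> interior {..T}"
      by (simp add: T_def)
    ultimately show ?thesis
      using continuous_on_interior by blast
  qed
  then show ?thesis
    by (simp add: continuous_at_imp_continuous_on)
qed

lemma norm_weighted_integral_le:
  fixes F :: "real \<Rightarrow> 'a::banach"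
  assumes F: "continuous_on {c..t} F" and bound: "\<And>u. u \<in> {c..t} \<Longrightarrow> norm (F u) \<le> B"
    and L: "0 < L" and t: "c \<le> t"
  shows "norm (exp (- L * (t - c)) *\<^sub>R integral {c..t} (\<lambda>u. exp (L * (u - c)) *\<^sub>R F u)) \<le> B / L"
proof -
  have B: "0 \<le> B"
    using bound[of c] t by (simp add: order_trans[OF norm_ge_zero])
  have "((\<lambda>u. exp (L * (u - c))) has_integral (exp (L * (t - c)) - 1) / L) {c..t}"
  proof -
    have "((\<lambda>u. exp (L * (u - c)) / L) has_vector_derivative exp (L * (u - c))) (at u within {c..t})"
      for u
      using L by (auto intro!: derivative_eq_intros simp flip: has_real_derivative_iff_has_vector_derivative)
    then show ?thesis
      using fundamental_theorem_of_calculus[OF t, of "\<lambda>u. exp (L * (u - c)) / L"]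
      by (simp add: diff_divide_distrib)
  qed
  then have int_exp: "integral {c..t} (\<lambda>u. B * exp (L * (u - c))) = B * ((exp (L * (t - c)) - 1) / L)"
    by (intro integral_unique has_integral_mult_right)
  have "norm (integral {c..t} (\<lambda>u. exp (L * (u - c)) *\<^sub>R F u))
      \<le> integral {c..t} (\<lambda>u. B * exp (L * (u - c)))"
  proof (rule integral_norm_bound_integral)
    show "(\<lambda>u. exp (L * (u - c)) *\<^sub>R F u) integrable_on {c..t}"
      by (intro integrable_continuous_interval continuous_intros F)
    show "(\<lambda>u. B * exp (L * (u - c))) integrable_on {c..t}"
      by (intro integrable_continuous_interval continuous_intros)
    show "norm (exp (L * (u - c)) *\<^sub>R F u) \<le> B * exp (L * (u - c))" if "u \<in> {c..t}" for u
      using bound[OF that] by (simp add: mult.commute)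
  qed
  then have "norm (integral {c..t} (\<lambda>u. exp (L * (u - c)) *\<^sub>R F u))
      \<le> B * ((exp (L * (t - c)) - 1) / L)"
    by (simp only: int_exp)
  then have "exp (- L * (t - c)) * norm (integral {c..t} (\<lambda>u. exp (L * (u - c)) *\<^sub>R F u))
      \<le> exp (- L * (t - c)) * (B * ((exp (L * (t - c)) - 1) / L))"
    by (rule mult_left_mono) simp
  also have "\<dots> = B / L * (1 - exp (- L * (t - c)))"
    using exp_minus_inverse[of "L * (t - c)"] by (simp add: field_simps)
  also have "\<dots> \<le> B / L"
    using B L by (intro mult_left_le) auto
  finally show ?thesis
    by simp
qed

text \<open>Existence: Picard iteration acts on \<open>Z t = e\<^sup>-\<^sup>L\<^sup>(\<^sup>t\<^sup>-\<^sup>c\<^sup>) X t\<close>, kept constant for \<open>t \<le> c\<close>, in the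
  space of bounded continuous functions; with this weight it is a contraction of ratio \<open>K/L\<close>.\<close>

definition weighted_picard ::
    "(real \<Rightarrow> 'a \<Rightarrow> 'a) \<Rightarrow> real \<Rightarrow> real \<Rightarrow> 'a \<Rightarrow> (real \<Rightarrow> 'a) \<Rightarrow> real \<Rightarrow> 'a::banach" where
  "weighted_picard M L c X0 Z t = exp (- L * (max c t - c)) *\<^sub>R
     (X0 + integral {c..max c t} (\<lambda>u. exp (L * (u - c)) *\<^sub>R M u (Z u)))"

lemma continuous_on_compose_rhs:
  assumes "continuous_on UNIV (\<lambda>(s, x). M s x)" and "continuous_on UNIV Z"
  shows "continuous_on UNIV (\<lambda>u. M u (Z u))"
  using continuous_on_compose2[OF assms(1), of UNIV "\<lambda>u. (u, Z u)"] assms(2)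
  by (simp add: continuous_on_Pair continuous_on_id)

lemma norm_weighted_picard_integral_le:
  fixes M :: "real \<Rightarrow> 'a::banach \<Rightarrow> 'a"
  assumes bound: "\<And>s x. norm (M s x) \<le> K * norm x" and K: "0 \<le> K"
    and cont: "continuous_on UNIV (\<lambda>(s, x). M s x)" and L: "0 < L"
    and W: "continuous_on UNIV W" and W_bound: "\<And>u. norm (W u) \<le> B"
  shows "norm (exp (- L * (max c t - c)) *\<^sub>R
    integral {c..max c t} (\<lambda>u. exp (L * (u - c)) *\<^sub>R M u (W u))) \<le> K * B / L"
proof -
  have "norm (M u (W u)) \<le> K * B" for u
    using order_trans[OF bound mult_left_mono[OF W_bound K]] .
  then show ?thesis
    using norm_weighted_integral_le[OF continuous_on_subset[OF continuous_on_compose_rhs[OF cont W]]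
        _ L, of c "max c t" "K * B"]
    by simp
qed

lemma weighted_picard_in_bcontfun:
  fixes M :: "real \<Rightarrow> 'a::banach \<Rightarrow> 'a"
  assumes bound: "\<And>s x. norm (M s x) \<le> K * norm x" and K: "0 \<le> K"
    and cont: "continuous_on UNIV (\<lambda>(s, x). M s x)" and L: "0 < L"
  shows "weighted_picard M L c X0 (apply_bcontfun Z) \<in> bcontfun"
proof (rule bcontfun_normI)
  show "continuous_on UNIV (weighted_picard M L c X0 (apply_bcontfun Z))"
    unfolding weighted_picard_def
    by (intro continuous_intros continuous_on_integral_upto continuous_on_compose_rhs[OF cont]) auto
  show "norm (weighted_picard M L c X0 (apply_bcontfun Z) t) \<le> norm X0 + K * norm Z / L" for t
  proof -
    let ?w = "exp (- L * (max c t - c))"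
    have "norm (weighted_picard M L c X0 (apply_bcontfun Z) t) \<le> norm (?w *\<^sub>R X0)
        + norm (?w *\<^sub>R integral {c..max c t} (\<lambda>u. exp (L * (u - c)) *\<^sub>R M u (apply_bcontfun Z u)))"
      unfolding weighted_picard_def scaleR_add_right by (rule norm_triangle_ineq)
    moreover have "norm (?w *\<^sub>R X0) \<le> norm X0"
      using L by (simp add: mult_left_le_one_le)
    moreover have "norm (?w *\<^sub>R integral {c..max c t}
        (\<lambda>u. exp (L * (u - c)) *\<^sub>R M u (apply_bcontfun Z u))) \<le> K * norm Z / L"
      by (rule norm_weighted_picard_integral_le[OF bound K cont L]) (auto intro: norm_bounded)
    ultimately show ?thesis
      by linarith
  qed
qed

lemma dist_weighted_picard_le:
  fixes M :: "real \<Rightarrow> 'a::banach \<Rightarrow> 'a"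
  assumes lin: "\<And>s. linear (M s)" and bound: "\<And>s x. norm (M s x) \<le> K * norm x" and K: "0 \<le> K"
    and cont: "continuous_on UNIV (\<lambda>(s, x). M s x)" and L: "0 < L"
  shows "dist (weighted_picard M L c X0 (apply_bcontfun Z1) t) (weighted_picard M L c X0 (apply_bcontfun Z2) t)
    \<le> K / L * dist Z1 Z2"
proof -
  define W where "W u = apply_bcontfun Z1 u - apply_bcontfun Z2 u" for u
  define H where "H Z = (\<lambda>u. exp (L * (u - c)) *\<^sub>R M u (apply_bcontfun Z u))" for Z
  have "H Z integrable_on {c..max c t}" for Z
    unfolding H_def
    by (intro integrable_continuous_interval continuous_intros
        continuous_on_subset[OF continuous_on_compose_rhs[OF cont]]) auto
  then have "integral {c..max c t} (H Z1) - integral {c..max c t} (H Z2)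
      = integral {c..max c t} (\<lambda>u. exp (L * (u - c)) *\<^sub>R M u (W u))"
    by (simp add: integral_diff[symmetric] H_def W_def linear_diff[OF lin] scaleR_diff_right)
  moreover have "norm (exp (- L * (max c t - c)) *\<^sub>R integral {c..max c t}
      (\<lambda>u. exp (L * (u - c)) *\<^sub>R M u (W u))) \<le> K * dist Z1 Z2 / L"
    by (rule norm_weighted_picard_integral_le[OF bound K cont L])
      (auto simp: W_def dist_norm[symmetric] intro: continuous_intros dist_bounded)
  ultimately show ?thesis
    by (simp add: weighted_picard_def H_def dist_norm scaleR_diff_right[symmetric])
qed

lemma has_vector_derivative_integral_from:
  fixes H :: "real \<Rightarrow> 'a::banach"
  assumes "continuous_on UNIV H" and "c \<le> s"
  shows "((\<lambda>t. X0 + integral {c..t} H) has_vector_derivative H s) (at s within {c..})"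
proof -
  have "((\<lambda>u. integral {c..u} H) has_vector_derivative H s) (at s within {c..s+1})"
    using assms by (intro integral_has_vector_derivative continuous_on_subset[OF assms(1)]) auto
  then have "((\<lambda>t. X0 + integral {c..t} H) has_vector_derivative H s) (at s within {c..s+1})"
    by (intro derivative_eq_intros) auto
  moreover have "at s within {c..} = at s within {c..s+1}"
    by (rule at_within_nhd[where S = "{..<s+1}"]) auto
  ultimately show ?thesis
    by simp
qed

lemma linear_ode_exists:
  fixes M :: "real \<Rightarrow> 'a::banach \<Rightarrow> 'a"
  assumes lin: "\<And>s. linear (M s)" and bound: "\<And>s x. norm (M s x) \<le> K * norm x"
    and cont: "continuous_on UNIV (\<lambda>(s, x). M s x)"
  shows "\<exists>X. X c = X0 \<and> (\<forall>s\<ge>c. (X has_vector_derivative M s (X s)) (at s within {c..}))"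
proof -
  define K' where "K' = max K 0"
  define L where "L = 2 * K' + 1"
  have K': "0 \<le> K'" "\<And>s x. norm (M s x) \<le> K' * norm x"
  proof -
    show "0 \<le> K'"
      by (simp add: K'_def)
    show "norm (M s x) \<le> K' * norm x" for s x
      using bound[of s x] mult_right_mono[of K K' "norm x"] by (simp add: K'_def)
  qed
  have L: "0 < L" "K' / L < 1"
    using K' by (auto simp: L_def)
  define \<Phi> where "\<Phi> Z = Bcontfun (weighted_picard M L c X0 (apply_bcontfun Z))" for Z
  have \<Phi>: "apply_bcontfun (\<Phi> Z) = weighted_picard M L c X0 (apply_bcontfun Z)" for Z
    unfolding \<Phi>_def using weighted_picard_in_bcontfun[OF K'(2,1) cont L(1)] by (simp add: Bcontfun_inverse)
  have "dist (\<Phi> Z1) (\<Phi> Z2) \<le> K' / L * dist Z1 Z2" for Z1 Z2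
    by (intro dist_bound) (simp only: \<Phi> dist_weighted_picard_le[OF lin K'(2,1) cont L(1)])
  then obtain Z where "\<Phi> Z = Z"
    using banach_fix_type[of "K' / L" \<Phi>] K' L by auto
  then have Z: "apply_bcontfun Z = weighted_picard M L c X0 (apply_bcontfun Z)"
    using \<Phi> by metis
  define H where "H = (\<lambda>u. exp (L * (u - c)) *\<^sub>R M u (apply_bcontfun Z u))"
  define X where "X t = X0 + integral {c..t} H" for t
  have contH: "continuous_on UNIV H"
    unfolding H_def by (intro continuous_intros continuous_on_compose_rhs[OF cont]) auto
  have "H s = M s (X s)" if "c \<le> s" for s
  proof -
    have "exp (L * (s - c)) * exp (- L * (s - c)) = 1"
      by (simp flip: exp_add)
    then have "exp (L * (s - c)) *\<^sub>R apply_bcontfun Z s = X s"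
      using that unfolding fun_cong[OF Z, of s] by (simp add: weighted_picard_def X_def H_def max_def)
    then show ?thesis
      by (simp add: H_def linear_scale[OF lin, symmetric])
  qed
  moreover have "(X has_vector_derivative H s) (at s within {c..})" if "c \<le> s" for s
    unfolding X_def by (rule has_vector_derivative_integral_from[OF contH that])
  moreover have "X c = X0"
    by (simp add: X_def)
  ultimately show ?thesis
    by auto
qed

section \<open>The equation on the Fourier side\<close>

text \<open>The equation couples only the frequencies \<open>\<eta>\<close> and \<open>-\<eta>\<close>: the pair \<open>(v s \<eta>, v s (-\<eta>))\<close>
  solves \<open>X' = coupled_rhs a \<eta> s X\<close>. The coefficient uses \<open>max 1 s\<close> in place of \<open>s\<close> so that it is
  continuous and bounded on the whole line; only \<open>s \<ge> 1\<close> matters.\<close>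

definition coupled_rhs :: "real \<Rightarrow> real \<Rightarrow> real \<Rightarrow> complex \<times> complex \<Rightarrow> complex \<times> complex" where
  "coupled_rhs a \<eta> s X =
     (- \<i> * complex_of_real (\<eta>\<^sup>2) * fst X
        + \<i> * complex_of_real (a\<^sup>2 / (2 * max 1 s)) * (fst X + cnj (snd X)),
      - \<i> * complex_of_real (\<eta>\<^sup>2) * snd X
        + \<i> * complex_of_real (a\<^sup>2 / (2 * max 1 s)) * (snd X + cnj (fst X)))"

lemma coupled_rhs_swap: "coupled_rhs a (- \<eta>) s (prod.swap X) = prod.swap (coupled_rhs a \<eta> s X)"
  by (simp add: coupled_rhs_def)

lemma linear_coupled_rhs: "linear (coupled_rhs a \<eta> s)"
  by (rule linearI) (auto simp: coupled_rhs_def algebra_simps add_divide_distrib scaleR_conv_of_real)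

lemma continuous_on_coupled_rhs: "continuous_on UNIV (\<lambda>(s, X). coupled_rhs a \<eta> s X)"
  unfolding coupled_rhs_def case_prod_beta
  by (intro continuous_intros) auto

lemma norm_coupled_rhs_le: "norm (coupled_rhs a \<eta> s X) \<le> 2 * (\<eta>\<^sup>2 + a\<^sup>2) * norm X"
proof -
  define k where "k = a\<^sup>2 / (2 * max 1 s)"
  have "a\<^sup>2 / max 1 s \<le> a\<^sup>2 / 1"
    by (intro divide_left_mono) auto
  then have k: "0 \<le> k" "2 * k \<le> a\<^sup>2"
    by (auto simp: k_def)
  have component: "norm (- \<i> * complex_of_real (\<eta>\<^sup>2) * p + \<i> * complex_of_real k * (p + cnj q))
      \<le> (\<eta>\<^sup>2 + a\<^sup>2) * norm X" if "norm p \<le> norm X" "norm q \<le> norm X" for p q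
  proof -
    have "norm (- \<i> * complex_of_real (\<eta>\<^sup>2) * p + \<i> * complex_of_real k * (p + cnj q))
        \<le> \<eta>\<^sup>2 * norm p + k * (norm p + norm q)"
      using norm_triangle_ineq[of "- \<i> * complex_of_real (\<eta>\<^sup>2) * p" "\<i> * complex_of_real k * (p + cnj q)"]
        mult_left_mono[OF norm_triangle_ineq[of p "cnj q"] k(1)]
      by (simp add: norm_mult norm_power k(1))
    also have "\<dots> \<le> \<eta>\<^sup>2 * norm X + k * (2 * norm X)"
      using that k by (intro add_mono mult_left_mono) auto
    also have "\<dots> \<le> (\<eta>\<^sup>2 + a\<^sup>2) * norm X"
      using mult_right_mono[OF k(2), of "norm X"] by (simp add: algebra_simps)
    finally show ?thesis .
  qed
  have "norm (coupled_rhs a \<eta> s X) \<le> norm (fst (coupled_rhs a \<eta> s X)) + norm (snd (coupled_rhs a \<eta> s X))"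
    by (metis norm_Pair_le prod.collapse)
  also have "\<dots> \<le> 2 * (\<eta>\<^sup>2 + a\<^sup>2) * norm X"
  proof -
    have "norm (fst X) \<le> norm X" "norm (snd X) \<le> norm X"
      by (metis norm_fst_le prod.collapse, metis norm_snd_le prod.collapse)
    then show ?thesis
      using component[of "fst X" "snd X"] component[of "snd X" "fst X"]
      unfolding coupled_rhs_def k_def[symmetric] by (simp add: algebra_simps)
  qed
  finally show ?thesis .
qed

lemma solves_fourier_eq_iff:
  "solves_fourier_eq a v \<longleftrightarrow> (\<forall>\<eta>. \<forall>s\<ge>1. ((\<lambda>r. v r \<eta>) has_vector_derivative
      fst (coupled_rhs a \<eta> s (v s \<eta>, v s (- \<eta>)))) (at s within {1..}))"
proof -
  have i_eq: "\<i> * d + w = 0 \<longleftrightarrow> d = \<i> * w" for d w :: complex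
  proof -
    have "\<i> * d + w = 0 \<longleftrightarrow> \<i> * (\<i> * d + w) = 0"
      by simp
    also have "\<dots> \<longleftrightarrow> d = \<i> * w"
      by (auto simp: algebra_simps)
    finally show ?thesis .
  qed
  have "\<i> * d - complex_of_real (\<eta>\<^sup>2) * p + complex_of_real (a\<^sup>2 / (2 * s)) * (p + cnj q) = 0 \<longleftrightarrow>
      d = fst (coupled_rhs a \<eta> s (p, q))" if "1 \<le> s" for d p q \<eta> s
    using i_eq[of d "- complex_of_real (\<eta>\<^sup>2) * p + complex_of_real (a\<^sup>2 / (2 * s)) * (p + cnj q)"] that
    by (simp add: coupled_rhs_def max_def algebra_simps)
  then show ?thesis
    unfolding solves_fourier_eq_def by (metis (no_types, lifting))
qed

lemma solves_fourier_eq_pair: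
  assumes "solves_fourier_eq a v" and "1 \<le> s"
  shows "((\<lambda>r. (v r \<eta>, v r (- \<eta>))) has_vector_derivative coupled_rhs a \<eta> s (v s \<eta>, v s (- \<eta>)))
    (at s within {1..})"
proof -
  note der = assms(1)[unfolded solves_fourier_eq_iff, rule_format, OF assms(2)]
  have "fst (coupled_rhs a (- \<eta>) s (v s (- \<eta>), v s \<eta>)) = snd (coupled_rhs a \<eta> s (v s \<eta>, v s (- \<eta>)))"
    using coupled_rhs_swap[of a \<eta> s "(v s \<eta>, v s (- \<eta>))"] by simp
  then show ?thesis
    using has_vector_derivative_Pair[OF der[of \<eta>] der[of "- \<eta>"]] by simp
qed

lemma solves_fourier_eq_unique:
  assumes "solves_fourier_eq a v" and "solves_fourier_eq a w"
    and "\<And>\<eta>. v 1 \<eta> = w 1 \<eta>" and "1 \<le> t"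
  shows "v t \<xi> = w t \<xi>"
proof -
  have "(v t \<xi>, v t (- \<xi>)) = (w t \<xi>, w t (- \<xi>))"
    by (rule linear_ode_unique[OF linear_coupled_rhs norm_coupled_rhs_le])
      (use assms solves_fourier_eq_pair in auto)
  then show ?thesis
    by simp
qed

text \<open>Existence: solve the ODE for the pair at every frequency; the solution at \<open>-\<eta>\<close> is the swap
  of the one at \<open>\<eta>\<close> by uniqueness, so the first components fit together.\<close>

lemma solves_fourier_eq_exists: "\<exists>v. solves_fourier_eq a v \<and> (\<forall>\<eta>. v 1 \<eta> = g \<eta>)"
proof -
  define Y where "Y \<eta> = (SOME X. X 1 = (g \<eta>, g (- \<eta>)) \<and>
      (\<forall>s\<ge>1. (X has_vector_derivative coupled_rhs a \<eta> s (X s)) (at s within {1..})))" for \<eta>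
  have Y: "Y \<eta> 1 = (g \<eta>, g (- \<eta>))"
    "\<And>s. 1 \<le> s \<Longrightarrow> (Y \<eta> has_vector_derivative coupled_rhs a \<eta> s (Y \<eta> s)) (at s within {1..})" for \<eta>
    using someI_ex[OF linear_ode_exists[OF linear_coupled_rhs norm_coupled_rhs_le
          continuous_on_coupled_rhs, of 1 "(g \<eta>, g (- \<eta>))" a \<eta>]]
    unfolding Y_def by auto
  have swap: "prod.swap (Y (- \<eta>) s) = Y \<eta> s" if "1 \<le> s" for \<eta> s
  proof (rule linear_ode_unique[OF linear_coupled_rhs norm_coupled_rhs_le _ Y(2) _ that])
    show "((\<lambda>r. prod.swap (Y (- \<eta>) r)) has_vector_derivative coupled_rhs a \<eta> u (prod.swap (Y (- \<eta>) u)))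
        (at u within {1..})" if "1 \<le> u" for u
    proof -
      note der = Y(2)[OF that, of "- \<eta>"]
      have "((\<lambda>r. (snd (Y (- \<eta>) r), fst (Y (- \<eta>) r))) has_vector_derivative
          prod.swap (coupled_rhs a (- \<eta>) u (Y (- \<eta>) u))) (at u within {1..})"
        using has_vector_derivative_Pair[OF bounded_linear.has_vector_derivative[OF bounded_linear_snd der]
            bounded_linear.has_vector_derivative[OF bounded_linear_fst der]]
        by (simp add: prod.swap_def)
      then show ?thesis
        using coupled_rhs_swap[of a "- \<eta>" u "Y (- \<eta>) u"] by (simp add: prod.swap_def)
    qed
  next
    have "Y (- \<eta>) 1 = (g (- \<eta>), g \<eta>)"
      using Y(1)[of "- \<eta>"] by simp
    then show "prod.swap (Y (- \<eta>) 1) = Y \<eta> 1"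
      by (simp add: Y(1))
  qed
  define v where "v r \<eta> = fst (Y \<eta> r)" for r \<eta>
  have Y_v: "Y \<eta> s = (v s \<eta>, v s (- \<eta>))" if "1 \<le> s" for \<eta> s
    using swap[OF that, of \<eta>] by (simp add: v_def prod_eq_iff)
  have "solves_fourier_eq a v"
    unfolding solves_fourier_eq_iff
  proof (intro allI impI)
    fix \<eta> s :: real assume s: "1 \<le> s"
    show "((\<lambda>r. v r \<eta>) has_vector_derivative fst (coupled_rhs a \<eta> s (v s \<eta>, v s (- \<eta>))))
        (at s within {1..})"
      using bounded_linear.has_vector_derivative[OF bounded_linear_fst Y(2)[OF s, of \<eta>]]
      unfolding Y_v[OF s] by (simp add: v_def)
  qed
  moreover have "v 1 \<eta> = g \<eta>" for \<eta>
    by (simp add: v_def Y(1))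
  ultimately show ?thesis
    by blast
qed

lemma sol_op_F_eqI:
  assumes "solves_fourier_eq a v" and "\<And>\<eta>. v 1 \<eta> = g \<eta>" and "1 \<le> t"
  shows "sol_op_F a t g \<xi> = v t \<xi>"
  unfolding sol_op_F_def
proof (rule the_equality)
  show "\<exists>w. solves_fourier_eq a w \<and> (\<forall>\<eta>. w 1 \<eta> = g \<eta>) \<and> w t \<xi> = v t \<xi>"
    using assms by blast
  show "z = v t \<xi>" if "\<exists>w. solves_fourier_eq a w \<and> (\<forall>\<eta>. w 1 \<eta> = g \<eta>) \<and> w t \<xi> = z" for z
    using that solves_fourier_eq_unique[OF _ assms(1) _ assms(3)] assms(2) by auto
qed

lemma solves_fourier_eq_diff:
  assumes "solves_fourier_eq a v" and "solves_fourier_eq a w"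
  shows "solves_fourier_eq a (\<lambda>r \<eta>. v r \<eta> - w r \<eta>)"
  unfolding solves_fourier_eq_iff
proof (intro allI impI)
  fix \<eta> s :: real assume s: "1 \<le> s"
  have "coupled_rhs a \<eta> s (v s \<eta> - w s \<eta>, v s (- \<eta>) - w s (- \<eta>))
      = coupled_rhs a \<eta> s (v s \<eta>, v s (- \<eta>)) - coupled_rhs a \<eta> s (w s \<eta>, w s (- \<eta>))"
    using linear_diff[OF linear_coupled_rhs] by (metis diff_Pair)
  then show "((\<lambda>r. v r \<eta> - w r \<eta>) has_vector_derivative
      fst (coupled_rhs a \<eta> s (v s \<eta> - w s \<eta>, v s (- \<eta>) - w s (- \<eta>)))) (at s within {1..})"
    using assms s unfolding solves_fourier_eq_iff by (simp add: has_vector_derivative_diff)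
qed

section \<open>The corrected transform of \<open>J\<omega>\<close>\<close>

text \<open>Here \<open>V\<close>, \<open>A\<close> stand for \<open>\<omega>\<^sup>^(s,\<eta>)\<close>, \<open>(x\<omega>)\<^sup>^(s,\<eta>)\<close>, primes for the values at \<open>-\<eta>\<close>, and the
  hypotheses are their time derivatives as given by the equation. Then
  \<open>A - 2s\<eta>V + (k/2)(V + cnj V')\<close> solves the equation; at \<open>\<eta> = 0\<close> the division gives \<open>k = 0\<close>.\<close>

lemma corrected_J_identity:
  fixes V V' A A' V\<^sub>t V\<^sub>t' A\<^sub>t :: complex and a s \<eta> :: real
  assumes s: "0 < s"
  defines "c \<equiv> complex_of_real (a\<^sup>2 / (2 * s))" and "e \<equiv> complex_of_real \<eta>"
    and "k \<equiv> complex_of_real (2 * a\<^sup>2 / \<eta>)"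
  assumes V\<^sub>t: "V\<^sub>t = - \<i> * e\<^sup>2 * V + \<i> * c * (V + cnj V')"
    and V\<^sub>t': "V\<^sub>t' = - \<i> * e\<^sup>2 * V' + \<i> * c * (V' + cnj V)"
    and A\<^sub>t: "A\<^sub>t = - \<i> * e\<^sup>2 * A + 2 * e * V + \<i> * c * (A + cnj A')"
  shows "\<i> * (A\<^sub>t - 2 * e * (V + complex_of_real s * V\<^sub>t) + k / 2 * (V\<^sub>t + cnj V\<^sub>t'))
      - complex_of_real (\<eta>\<^sup>2) * (A - 2 * complex_of_real s * e * V + k / 2 * (V + cnj V'))
      + c * ((A - 2 * complex_of_real s * e * V + k / 2 * (V + cnj V'))
          + cnj (A' + 2 * complex_of_real s * e * V' - k / 2 * (V' + cnj V))) = 0"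
proof (cases "\<eta> = 0")
  case True
  then show ?thesis
    using s unfolding V\<^sub>t V\<^sub>t' A\<^sub>t c_def e_def k_def by (simp add: complex_eq_iff field_simps)
next
  case False
  then show ?thesis
    using s unfolding V\<^sub>t V\<^sub>t' A\<^sub>t c_def e_def k_def
    by (simp add: complex_eq_iff field_simps power2_eq_square)
qed

locale decaying_solution =
  fixes a :: real and \<omega> \<omega>t \<omega>x \<omega>xx :: "real \<Rightarrow> real \<Rightarrow> complex"
  assumes deriv_t: "\<forall>s\<ge>1. \<forall>x. ((\<lambda>r. \<omega> r x) has_vector_derivative \<omega>t s x) (at s within {1..})"
    and deriv_x: "\<forall>s\<ge>1. \<forall>x. (\<omega> s has_vector_derivative \<omega>x s x) (at x)"
    and deriv_xx: "\<forall>s\<ge>1. \<forall>x. (\<omega>x s has_vector_derivative \<omega>xx s x) (at x)"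
    and eqn: "\<forall>s\<ge>1. \<forall>x. \<i> * \<omega>t s x + \<omega>xx s x
                + complex_of_real (a\<^sup>2 / (2 * s)) * (\<omega> s x + cnj (\<omega> s x)) = 0"
    and cont_t: "continuous_on ({1..} \<times> UNIV) (\<lambda>(s, x). \<omega>t s x)"
    and decay: "\<forall>T\<ge>1. \<exists>C. \<forall>s\<in>{1..T}. \<forall>x.
                  norm (\<omega> s x) + norm (\<omega>x s x) + norm (\<omega>xx s x) + norm (\<omega>t s x)
                    \<le> C / (1 + \<bar>x\<bar>) ^ 3"
begin

lemma \<omega>t_eq:
  assumes "1 \<le> s"
  shows "\<omega>t s x = \<i> * \<omega>xx s x + \<i> * complex_of_real (a\<^sup>2 / (2 * s)) * (\<omega> s x + cnj (\<omega> s x))"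
proof -
  have "\<i> * (\<i> * \<omega>t s x + \<omega>xx s x
      + complex_of_real (a\<^sup>2 / (2 * s)) * (\<omega> s x + cnj (\<omega> s x))) = 0"
    using eqn assms by simp
  then show ?thesis
    by (simp add: algebra_simps)
qed

lemma continuous_component:
  assumes "1 \<le> r" and "f \<in> {\<omega> r, \<omega>x r, \<omega>xx r, \<omega>t r}"
  shows "continuous_on UNIV f"
proof -
  have \<omega>: "continuous_on UNIV (\<omega> r)" and \<omega>x: "continuous_on UNIV (\<omega>x r)"
    using has_vector_derivative_continuous deriv_x deriv_xx assms(1)
    by (blast intro: continuous_at_imp_continuous_on)+
  have "continuous_on UNIV ((\<lambda>(s, x). \<omega>t s x) \<circ> (\<lambda>x. (r, x)))"
    using assms(1) by (intro continuous_on_compose continuous_on_subset[OF cont_t] continuous_intros) auto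
  then have \<omega>t: "continuous_on UNIV (\<omega>t r)"
    by (simp add: comp_def)
  have "\<omega>xx r = (\<lambda>x. - \<i> * \<omega>t r x - complex_of_real (a\<^sup>2 / (2 * r)) * (\<omega> r x + cnj (\<omega> r x)))"
    using eqn assms(1) by (auto simp: fun_eq_iff algebra_simps eq_neg_iff_add_eq_0)
  moreover have "continuous_on UNIV
      (\<lambda>x. - \<i> * \<omega>t r x - complex_of_real (a\<^sup>2 / (2 * r)) * (\<omega> r x + cnj (\<omega> r x)))"
    using \<omega> \<omega>t by (intro continuous_intros)
  ultimately have "continuous_on UNIV (\<omega>xx r)"
    by simp
  with \<omega> \<omega>x \<omega>t assms(2) show ?thesis
    by auto
qed

lemma decay_component:
  assumes "1 \<le> T"
  obtains C where "\<And>r x f. r \<in> {1..T} \<Longrightarrow> f \<in> {\<omega> r, \<omega>x r, \<omega>xx r, \<omega>t r} \<Longrightarrow>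
    norm (f x) \<le> C / (1 + \<bar>x\<bar>) ^ 3"
proof -
  obtain C where C: "\<forall>r\<in>{1..T}. \<forall>x. norm (\<omega> r x) + norm (\<omega>x r x) + norm (\<omega>xx r x) + norm (\<omega>t r x)
      \<le> C / (1 + \<bar>x\<bar>) ^ 3"
    using decay assms by blast
  then have "norm (f x) \<le> C / (1 + \<bar>x\<bar>) ^ 3"
    if "r \<in> {1..T}" "f \<in> {\<omega> r, \<omega>x r, \<omega>xx r, \<omega>t r}" for r x f
  proof -
    have "norm (\<omega> r x) + norm (\<omega>x r x) + norm (\<omega>xx r x) + norm (\<omega>t r x) \<le> C / (1 + \<bar>x\<bar>) ^ 3"
      using C that(1) by blast
    moreover have "f x \<in> {\<omega> r x, \<omega>x r x, \<omega>xx r x, \<omega>t r x}"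
      using that(2) by auto
    ultimately show ?thesis
      using norm_ge_zero[of "\<omega> r x"] norm_ge_zero[of "\<omega>x r x"] norm_ge_zero[of "\<omega>xx r x"]
        norm_ge_zero[of "\<omega>t r x"] by (auto simp del: norm_ge_zero)
  qed
  then show ?thesis
    using that by blast
qed

lemma
  assumes "1 \<le> r" and "f \<in> {\<omega> r, \<omega>x r, \<omega>xx r, \<omega>t r}"
  shows integrable_component: "integrable lborel f"
      "integrable lborel (\<lambda>x. complex_of_real x * f x)"
    and tendsto_zero_component: "(f \<longlongrightarrow> 0) at_top" "(f \<longlongrightarrow> 0) at_bot"
      "((\<lambda>x. complex_of_real x * f x) \<longlongrightarrow> 0) at_top"
      "((\<lambda>x. complex_of_real x * f x) \<longlongrightarrow> 0) at_bot"
proof -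
  obtain C where "\<And>x. norm (f x) \<le> C / (1 + \<bar>x\<bar>) ^ 3"
    using decay_component[OF assms(1)] assms by (metis atLeastAtMost_iff order_refl)
  note decays = integrable_cube_decay[OF continuous_component[OF assms] this]
    tendsto_zero_cube_decay[OF continuous_component[OF assms] this]
  show "integrable lborel f" "integrable lborel (\<lambda>x. complex_of_real x * f x)"
    "(f \<longlongrightarrow> 0) at_top" "(f \<longlongrightarrow> 0) at_bot"
    "((\<lambda>x. complex_of_real x * f x) \<longlongrightarrow> 0) at_top"
    "((\<lambda>x. complex_of_real x * f x) \<longlongrightarrow> 0) at_bot"
    by (fact decays)+
qed

lemma
  assumes r: "1 \<le> r" and f: "(f, f') \<in> {(\<omega> r, \<omega>x r), (\<omega>x r, \<omega>xx r)}"
  shows fourier_derivative_component: "fourier f' \<eta> = \<i> * complex_of_real \<eta> * fourier f \<eta>"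
    and fourier_x_derivative_component: "fourier (\<lambda>x. complex_of_real x * f' x) \<eta>
      = \<i> * complex_of_real \<eta> * fourier (\<lambda>x. complex_of_real x * f x) \<eta> - fourier f \<eta>"
proof -
  have components: "f \<in> {\<omega> r, \<omega>x r, \<omega>xx r, \<omega>t r}" "f' \<in> {\<omega> r, \<omega>x r, \<omega>xx r, \<omega>t r}"
    using f by auto
  have der: "(f has_vector_derivative f' x) (at x)" for x
    using f deriv_x deriv_xx r by auto
  have cont: "isCont f' x" for x
    using continuous_component[OF r components(2)] by (simp add: continuous_on_eq_continuous_at)
  note facts = integrable_component[OF r] tendsto_zero_component[OF r]
  show "fourier f' \<eta> = \<i> * complex_of_real \<eta> * fourier f \<eta>"
    by (rule fourier_vector_derivative[OF der cont]) (use facts components in auto)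
  show "fourier (\<lambda>x. complex_of_real x * f' x) \<eta>
      = \<i> * complex_of_real \<eta> * fourier (\<lambda>x. complex_of_real x * f x) \<eta> - fourier f \<eta>"
    by (rule fourier_x_vector_derivative[OF der cont]) (use facts components in auto)
qed

lemma fourier_Jop:
  assumes r: "1 \<le> r"
  shows "fourier (Jop r (\<omega> r)) \<eta> = fourier (\<lambda>x. complex_of_real x * \<omega> r x) \<eta>
    - 2 * complex_of_real r * complex_of_real \<eta> * fourier (\<omega> r) \<eta>"
proof -
  have "Jop r (\<omega> r) = (\<lambda>x. complex_of_real x * \<omega> r x + 2 * \<i> * complex_of_real r * \<omega>x r x)"
    using deriv_x r by (auto simp: Jop_def fun_eq_iff intro: vector_derivative_at)
  then have "fourier (Jop r (\<omega> r)) \<eta>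
      = fourier (\<lambda>x. complex_of_real x * \<omega> r x) \<eta> + 2 * \<i> * complex_of_real r * fourier (\<omega>x r) \<eta>"
    using integrable_component[OF r] by (simp add: fourier_add fourier_mult_left)
  then show ?thesis
    using fourier_derivative_component[OF r, of "\<omega> r" "\<omega>x r"] by (simp add: algebra_simps)
qed

lemma fourier_\<omega>t:
  assumes s: "1 \<le> s"
  defines "c \<equiv> complex_of_real (a\<^sup>2 / (2 * s))"
  shows "fourier (\<omega>t s) \<eta> = - \<i> * (complex_of_real \<eta>)\<^sup>2 * fourier (\<omega> s) \<eta>
      + \<i> * c * (fourier (\<omega> s) \<eta> + cnj (fourier (\<omega> s) (- \<eta>)))"
proof -
  have "\<omega>t s = (\<lambda>x. \<i> * \<omega>xx s x + \<i> * c * (\<omega> s x + cnj (\<omega> s x)))"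
    using \<omega>t_eq[OF s] by (auto simp: c_def fun_eq_iff)
  then have "fourier (\<omega>t s) \<eta> = \<i> * fourier (\<omega>xx s) \<eta> + \<i> * c * (fourier (\<omega> s) \<eta> + cnj (fourier (\<omega> s) (- \<eta>)))"
    using integrable_component[OF s] by (simp add: fourier_equation_rhs)
  then show ?thesis
    using fourier_derivative_component[OF s, of "\<omega> s" "\<omega>x s" \<eta>]
      fourier_derivative_component[OF s, of "\<omega>x s" "\<omega>xx s" \<eta>]
    by (simp add: power2_eq_square algebra_simps)
qed

lemma fourier_x_\<omega>t:
  assumes s: "1 \<le> s"
  defines "c \<equiv> complex_of_real (a\<^sup>2 / (2 * s))"
  shows "fourier (\<lambda>x. complex_of_real x * \<omega>t s x) \<eta>
      = - \<i> * (complex_of_real \<eta>)\<^sup>2 * fourier (\<lambda>x. complex_of_real x * \<omega> s x) \<eta>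
        + 2 * complex_of_real \<eta> * fourier (\<omega> s) \<eta>
        + \<i> * c * (fourier (\<lambda>x. complex_of_real x * \<omega> s x) \<eta>
                  + cnj (fourier (\<lambda>x. complex_of_real x * \<omega> s x) (- \<eta>)))"
proof -
  have eq: "(\<lambda>x. complex_of_real x * \<omega>t s x) = (\<lambda>x. \<i> * (complex_of_real x * \<omega>xx s x)
      + \<i> * c * (complex_of_real x * \<omega> s x + cnj (complex_of_real x * \<omega> s x)))"
    using \<omega>t_eq[OF s] by (auto simp: c_def fun_eq_iff algebra_simps)
  have "integrable lborel (\<lambda>x. complex_of_real x * \<omega> s x)"
    "integrable lborel (\<lambda>x. complex_of_real x * \<omega>xx s x)"
    using integrable_component(2)[OF s] by auto
  then have "fourier (\<lambda>x. complex_of_real x * \<omega>t s x) \<eta>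
      = \<i> * fourier (\<lambda>x. complex_of_real x * \<omega>xx s x) \<eta>
        + \<i> * c * (fourier (\<lambda>x. complex_of_real x * \<omega> s x) \<eta>
                  + cnj (fourier (\<lambda>x. complex_of_real x * \<omega> s x) (- \<eta>)))"
    unfolding eq by (rule fourier_equation_rhs)
  then show ?thesis
    using fourier_derivative_component[OF s, of "\<omega> s" "\<omega>x s" \<eta>]
      fourier_x_derivative_component[OF s, of "\<omega> s" "\<omega>x s" \<eta>]
      fourier_x_derivative_component[OF s, of "\<omega>x s" "\<omega>xx s" \<eta>]
    by (simp add: power2_eq_square algebra_simps)
qed

lemma
  assumes s: "1 \<le> s"
  shows has_vector_derivative_fourier_\<omega>:
      "((\<lambda>r. fourier (\<omega> r) \<eta>) has_vector_derivative fourier (\<omega>t s) \<eta>) (at s within {1..})"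
    and has_vector_derivative_fourier_x_\<omega>:
      "((\<lambda>r. fourier (\<lambda>x. complex_of_real x * \<omega> r x) \<eta>) has_vector_derivative
        fourier (\<lambda>x. complex_of_real x * \<omega>t s x) \<eta>) (at s within {1..})"
proof -
  obtain C where C: "\<And>r x f. r \<in> {1..s + 1} \<Longrightarrow> f \<in> {\<omega> r, \<omega>x r, \<omega>xx r, \<omega>t r} \<Longrightarrow>
      norm (f x) \<le> C / (1 + \<bar>x\<bar>) ^ 3"
    using decay_component[of "s + 1"] s by auto
  have bounds: "norm (\<omega>t r x) \<le> C / (1 + \<bar>x\<bar>) ^ 2"
    "norm (complex_of_real x * \<omega>t r x) \<le> C / (1 + \<bar>x\<bar>) ^ 2"
    if "1 \<le> r" "r \<le> s + 1" for r x
  proof -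
    have "norm (\<omega>t r x) \<le> C / (1 + \<bar>x\<bar>) ^ 3" for x
      using C[of r "\<omega>t r"] that by auto
    then show "norm (\<omega>t r x) \<le> C / (1 + \<bar>x\<bar>) ^ 2"
      "norm (complex_of_real x * \<omega>t r x) \<le> C / (1 + \<bar>x\<bar>) ^ 2"
      by (rule cube_decay_imp_square_decay)+
  qed
  have "norm (\<omega> s 0) \<le> C"
    using C[of s "\<omega> s" 0] s by simp
  then have "0 \<le> C"
    by (rule order_trans[OF norm_ge_zero])
  then have B: "integrable lborel (\<lambda>x. C / (1 + \<bar>x\<bar>) ^ 2)"
    by (intro integrable_square_decay[where C = C]) auto
  have der: "((\<lambda>r. \<omega> r x) has_vector_derivative \<omega>t r x) (at r within {1..})" if "1 \<le> r" for r x
    using deriv_t that by blast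
  show "((\<lambda>r. fourier (\<omega> r) \<eta>) has_vector_derivative fourier (\<omega>t s) \<eta>) (at s within {1..})"
    by (rule has_vector_derivative_fourier_parameter[OF s der _ _ bounds(1) B])
      (use integrable_component s in auto)
  show "((\<lambda>r. fourier (\<lambda>x. complex_of_real x * \<omega> r x) \<eta>) has_vector_derivative
      fourier (\<lambda>x. complex_of_real x * \<omega>t s x) \<eta>) (at s within {1..})"
    by (rule has_vector_derivative_fourier_parameter[OF s _ _ _ bounds(2) B])
      (use integrable_component s der in \<open>auto intro: has_vector_derivative_mult_right\<close>)
qed

abbreviation corrected_J_hat :: "real \<Rightarrow> real \<Rightarrow> complex" where
  "corrected_J_hat r \<eta> \<equiv> fourier (Jop r (\<omega> r)) \<eta>
      + complex_of_real (2 * a\<^sup>2 / \<eta>) * fourier (\<lambda>x. complex_of_real (Re (\<omega> r x))) \<eta>"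

lemma corrected_J_hat_eq:
  assumes r: "1 \<le> r"
  shows "corrected_J_hat r \<eta> = fourier (\<lambda>x. complex_of_real x * \<omega> r x) \<eta>
      - 2 * complex_of_real r * complex_of_real \<eta> * fourier (\<omega> r) \<eta>
      + complex_of_real (2 * a\<^sup>2 / \<eta>) / 2 * (fourier (\<omega> r) \<eta> + cnj (fourier (\<omega> r) (- \<eta>)))"
proof -
  have "integrable lborel (\<omega> r)"
    using integrable_component(1)[OF r] by simp
  then show ?thesis
    by (simp add: fourier_Jop[OF r] fourier_Re)
qed

lemma has_vector_derivative_corrected_J_hat:
  fixes \<eta> :: real
  assumes s: "1 \<le> s"
  defines "e \<equiv> complex_of_real \<eta>" and "k \<equiv> complex_of_real (2 * a\<^sup>2 / \<eta>)"
  shows "((\<lambda>r. corrected_J_hat r \<eta>) has_vector_derivative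
      fourier (\<lambda>x. complex_of_real x * \<omega>t s x) \<eta>
      - 2 * e * (fourier (\<omega> s) \<eta> + complex_of_real s * fourier (\<omega>t s) \<eta>)
      + k / 2 * (fourier (\<omega>t s) \<eta> + cnj (fourier (\<omega>t s) (- \<eta>)))) (at s within {1..})"
proof -
  have "((\<lambda>r. complex_of_real r) has_vector_derivative 1) (at s within {1..})"
    by (auto intro!: derivative_eq_intros simp flip: has_real_derivative_iff_has_vector_derivative)
  note product = has_vector_derivative_mult[OF this has_vector_derivative_fourier_\<omega>[OF s, of \<eta>]]
  let ?J = "\<lambda>r. fourier (\<lambda>x. complex_of_real x * \<omega> r x) \<eta> - 2 * e * (complex_of_real r * fourier (\<omega> r) \<eta>)
        + k / 2 * (fourier (\<omega> r) \<eta> + cnj (fourier (\<omega> r) (- \<eta>)))"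
  have "(?J has_vector_derivative fourier (\<lambda>x. complex_of_real x * \<omega>t s x) \<eta>
        - 2 * e * (complex_of_real s * fourier (\<omega>t s) \<eta> + 1 * fourier (\<omega> s) \<eta>)
        + k / 2 * (fourier (\<omega>t s) \<eta> + cnj (fourier (\<omega>t s) (- \<eta>)))) (at s within {1..})"
    by (intro has_vector_derivative_diff has_vector_derivative_add has_vector_derivative_mult_right
        has_vector_derivative_cnj product has_vector_derivative_fourier_\<omega>[OF s]
        has_vector_derivative_fourier_x_\<omega>[OF s])
  then have "(?J has_vector_derivative fourier (\<lambda>x. complex_of_real x * \<omega>t s x) \<eta>
        - 2 * e * (fourier (\<omega> s) \<eta> + complex_of_real s * fourier (\<omega>t s) \<eta>)
        + k / 2 * (fourier (\<omega>t s) \<eta> + cnj (fourier (\<omega>t s) (- \<eta>)))) (at s within {1..})"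
    by (simp add: algebra_simps)
  then show ?thesis
    by (rule has_vector_derivative_transform_within[where d = 1])
      (use s corrected_J_hat_eq in \<open>auto simp: e_def k_def algebra_simps\<close>)
qed

lemma solves_fourier_eq_corrected_J: "solves_fourier_eq a corrected_J_hat"
  unfolding solves_fourier_eq_def
proof (intro allI impI)
  fix \<eta> s :: real assume s: "1 \<le> s"
  have "\<i> * (fourier (\<lambda>x. complex_of_real x * \<omega>t s x) \<eta>
      - 2 * complex_of_real \<eta> * (fourier (\<omega> s) \<eta> + complex_of_real s * fourier (\<omega>t s) \<eta>)
      + complex_of_real (2 * a\<^sup>2 / \<eta>) / 2 * (fourier (\<omega>t s) \<eta> + cnj (fourier (\<omega>t s) (- \<eta>))))
      - complex_of_real (\<eta>\<^sup>2) * corrected_J_hat s \<eta>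
      + complex_of_real (a\<^sup>2 / (2 * s)) * (corrected_J_hat s \<eta> + cnj (corrected_J_hat s (- \<eta>))) = 0"
    using corrected_J_identity[where s = s and a = a and \<eta> = \<eta> and V = "fourier (\<omega> s) \<eta>"
        and V' = "fourier (\<omega> s) (- \<eta>)" and A = "fourier (\<lambda>x. complex_of_real x * \<omega> s x) \<eta>"
        and A' = "fourier (\<lambda>x. complex_of_real x * \<omega> s x) (- \<eta>)" and V\<^sub>t = "fourier (\<omega>t s) \<eta>"
        and V\<^sub>t' = "fourier (\<omega>t s) (- \<eta>)" and A\<^sub>t = "fourier (\<lambda>x. complex_of_real x * \<omega>t s x) \<eta>"]
      fourier_\<omega>t[OF s, of \<eta>] fourier_\<omega>t[OF s, of "- \<eta>"] fourier_x_\<omega>t[OF s, of \<eta>] s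
    unfolding corrected_J_hat_eq[OF s] by simp
  with has_vector_derivative_corrected_J_hat[OF s]
  show "\<exists>d. ((\<lambda>r. corrected_J_hat r \<eta>) has_vector_derivative d) (at s within {1..}) \<and>
      \<i> * d - complex_of_real (\<eta>\<^sup>2) * corrected_J_hat s \<eta>
      + complex_of_real (a\<^sup>2 / (2 * s)) * (corrected_J_hat s \<eta> + cnj (corrected_J_hat s (- \<eta>))) = 0"
    by blast
qed

end

theorem proposition5p1:
  fixes a :: real and \<omega> \<omega>t \<omega>x \<omega>xx :: "real \<Rightarrow> real \<Rightarrow> complex" and t \<xi> :: real
  assumes a_pos: "a > 0"
    and deriv_t: "\<forall>s\<ge>1. \<forall>x. ((\<lambda>r. \<omega> r x) has_vector_derivative \<omega>t s x) (at s within {1..})"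
    and deriv_x: "\<forall>s\<ge>1. \<forall>x. (\<omega> s has_vector_derivative \<omega>x s x) (at x)"
    and deriv_xx: "\<forall>s\<ge>1. \<forall>x. (\<omega>x s has_vector_derivative \<omega>xx s x) (at x)"
    and eqn: "\<forall>s\<ge>1. \<forall>x. \<i> * \<omega>t s x + \<omega>xx s x
                + complex_of_real (a\<^sup>2 / (2 * s)) * (\<omega> s x + cnj (\<omega> s x)) = 0"
    and cont_t: "continuous_on ({1..} \<times> UNIV) (\<lambda>(s, x). \<omega>t s x)"
    and decay: "\<forall>T\<ge>1. \<exists>C. \<forall>s\<in>{1..T}. \<forall>x.
                  norm (\<omega> s x) + norm (\<omega>x s x) + norm (\<omega>xx s x) + norm (\<omega>t s x)
                    \<le> C / (1 + \<bar>x\<bar>) ^ 3"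
    and t_ge: "t \<ge> 1"
    and xi_ne: "\<xi> \<noteq> 0"
  shows "fourier (Jop t (\<omega> t)) \<xi> =
           sol_op_F a t (fourier (Jop 1 (\<omega> 1))) \<xi>
         + sol_op_F a t (\<lambda>\<eta>. complex_of_real (2 * a\<^sup>2 / \<eta>)
                              * fourier (\<lambda>x. complex_of_real (Re (\<omega> 1 x))) \<eta>) \<xi>
         - complex_of_real (2 * a\<^sup>2 / \<xi>) * fourier (\<lambda>x. complex_of_real (Re (\<omega> t x))) \<xi>"
proof -
  interpret decaying_solution a \<omega> \<omega>t \<omega>x \<omega>xx
    by (intro decaying_solution.intro deriv_t deriv_x deriv_xx eqn cont_t decay)
  obtain v where v: "solves_fourier_eq a v" "\<And>\<eta>. v 1 \<eta> = fourier (Jop 1 (\<omega> 1)) \<eta>"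
    using solves_fourier_eq_exists by blast
  have "sol_op_F a t (fourier (Jop 1 (\<omega> 1))) \<xi> = v t \<xi>"
    by (rule sol_op_F_eqI[OF v t_ge])
  moreover have "sol_op_F a t (\<lambda>\<eta>. complex_of_real (2 * a\<^sup>2 / \<eta>)
        * fourier (\<lambda>x. complex_of_real (Re (\<omega> 1 x))) \<eta>) \<xi>
      = fourier (Jop t (\<omega> t)) \<xi>
        + complex_of_real (2 * a\<^sup>2 / \<xi>) * fourier (\<lambda>x. complex_of_real (Re (\<omega> t x))) \<xi> - v t \<xi>"
    by (rule sol_op_F_eqI[OF solves_fourier_eq_diff[OF solves_fourier_eq_corrected_J v(1)] _ t_ge])
      (simp add: v(2))
  ultimately show ?thesis
    by simp
qed

end
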